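(* Fix integers $\Lambda\ge1$, $\lambda\in\{1,\dots,\Lambda\}$, $K\ge1$ and $N\ge K$, and consider the ensemble $\mathcal B_\lambda$ of all connectivities in which each of the $K$ users is connected to exactly $\lambda$ of the $\Lambda$ caches, all connectivities being equiprobable. Under a fixed uncoded cache placement (common to all connectivities), the optimal average worst-case load satisfies $R^\star_{\text{avg},\mathcal B_\lambda}(M)\ge R_{\text{avg},\mathcal B_\lambda,\text{LB}}(M)$ for all $M\in[0, N(\Lambda-\lambda+1)/\Lambda]$, where $R_{\text{avg},\mathcal B_\lambda,\text{LB}}$ is the piecewise linear curve with corner points \[ \left(t\frac{N}{\Lambda},\ \frac{K\binom{\Lambda}{t+\lambda}}{\binom{\Lambda}{\lambda}\binom{\Lambda}{t}}+A_t\right),\qquad t\in\{0,1,\dots,\Lambda-\lambda+1\}, \] with \[ A_t=\frac{K}{|\mathcal B_\lambda|}\binom{\Lambda-t}{\lambda}\left(1-\frac{1}{\binom{t+\lambda}{\lambda}}\right),\qquad |\mathcal B_\lambda|=\binom{K+\binom{\Lambda}{\lambda}-1}{K}. \]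
   Context: Multi-access coded caching model: a server holds $N$ files $W_1,\dots,W_N$ of $B$ bits each; $\Lambda$ caches, each storing $MB$ bits; $K$ users, $N\ge K$. Each user $u$ is connected to a subset $\mathcal U_u\subseteq[\Lambda]$ of caches and can read their full contents. A connectivity is identified, up to permutation of users, with the vector $(K_{\mathcal U}:\mathcal U\subseteq[\Lambda])$ of non-negative integers summing to $K$, where $K_{\mathcal U}$ is the number of users whose set of connected caches is exactly $\mathcal U$. $\mathcal B_\lambda$ is the set of all such vectors supported on subsets of size exactly $\lambda$ (so $|\mathcal B_\lambda|=\binom{K+\binom{\Lambda}{\lambda}-1}{K}$). Uncoded placement: each file $W_n$ is partitioned into disjoint subfiles $W_{n,\mathcal T}$, $\mathcal T\subseteq[\Lambda]$, and cache $\ell$ stores exactly the $W_{n,\mathcal T}$ with $\ell\in\mathcal T$, at most $MB$ bits per cache. Delivery: each user requests a file index; the server broadcasts an error-free message $X$ depending on the library and demands; each user must decode its requested file from $X$ and its connected caches. For a placement $P$ and a connectivity $b$, $R_b(P)$ is the minimum over delivery schemes (designed with knowledge of $b$) of the worst-case (over demand vectors) value of $|X|/B$. The optimal average worst-case load over the ensemble is $R^\star_{\text{avg},\mathcal B_\lambda}(M)=\inf_P \frac{1}{|\mathcal B_\lambda|}\sum_{b\in\mathcal B_\lambda}R_b(P)$, the infimum over uncoded placements $P$ of cache size $M$ (the placement is fixed, i.e. chosen without knowledge of the connectivity). A piecewise linear curve with given corner points is the linear interpolation between consecutive points. Convention: $\binom{n}{k}=0$ if $n<0$, $k<0$ or $n<k$.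 *)

theory Defs
  imports Complex_Main "HOL-Library.FuncSet"
begin

(* Indexing conventions: files {..<N}, caches {..<Lam}, users {..<K}, bits of a file {..<B}. *)

type_synonym library = "nat \<Rightarrow> nat \<Rightarrow> bool"   (* file index \<Rightarrow> bit index \<Rightarrow> bit *)

(* a library of N files of B bits each (bits outside the range are fixed to False) *)
definition valid_lib :: "nat \<Rightarrow> nat \<Rightarrow> library \<Rightarrow> bool" where
  "valid_lib N B W \<longleftrightarrow> (\<forall>n i. \<not> (n < N \<and> i < B) \<longrightarrow> W n i = False)"

(* uncoded placement: bit i of file n belongs to subfile W_{n,pl n i}, pl n i \<subseteq> [Lam];
   cache l stores exactly the bits with l \<in> pl n i; at most M*B bits per cache; B \<ge> 1 *)
definition uncoded_placement ::
  "nat \<Rightarrow> nat \<Rightarrow> real \<Rightarrow> nat \<Rightarrow> (nat \<Rightarrow> nat \<Rightarrow> nat set) \<Rightarrow> bool" where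
  "uncoded_placement Lam N M B pl \<longleftrightarrow>
     B > 0 \<and> (\<forall>n<N. \<forall>i<B. pl n i \<subseteq> {..<Lam}) \<and>
     (\<forall>l<Lam. real (card {(n, i). n < N \<and> i < B \<and> l \<in> pl n i}) \<le> M * real B)"

definition cache_view ::
  "nat \<Rightarrow> nat \<Rightarrow> (nat \<Rightarrow> nat \<Rightarrow> nat set) \<Rightarrow> nat set \<Rightarrow> library \<Rightarrow> library" where
  "cache_view N B pl U W =
     (\<lambda>n i. if n < N \<and> i < B \<and> pl n i \<inter> U \<noteq> {} then W n i else False)"

definition demands :: "nat \<Rightarrow> nat \<Rightarrow> (nat \<Rightarrow> nat) set" where
  "demands K N = {..<K} \<rightarrow>\<^sub>E {..<N}"

definition delivery_scheme ::
  "nat \<Rightarrow> nat \<Rightarrow> nat \<Rightarrow> (nat \<Rightarrow> nat \<Rightarrow> nat set) \<Rightarrow> (nat \<Rightarrow> nat set) \<Rightarrow>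
   ((nat \<Rightarrow> nat) \<Rightarrow> library \<Rightarrow> bool list) \<Rightarrow> ((nat \<Rightarrow> nat) \<Rightarrow> nat) \<Rightarrow> bool" where
  "delivery_scheme K N B pl conn enc len \<longleftrightarrow>
     (\<forall>d \<in> demands K N.
        (\<forall>W. valid_lib N B W \<longrightarrow> length (enc d W) = len d) \<and>
        (\<forall>u<K. \<exists>dec :: bool list \<Rightarrow> library \<Rightarrow> nat \<Rightarrow> bool.
            \<forall>W. valid_lib N B W \<longrightarrow>
              (\<forall>i<B. dec (enc d W) (cache_view N B pl (conn u) W) i = W (d u) i)))"

definition load_conn ::
  "nat \<Rightarrow> nat \<Rightarrow> nat \<Rightarrow> (nat \<Rightarrow> nat \<Rightarrow> nat set) \<Rightarrow> (nat \<Rightarrow> nat set) \<Rightarrow> real" where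
  "load_conn K N B pl conn =
     Inf {r. \<exists>enc len. delivery_scheme K N B pl conn enc len \<and>
                      r = real (Max (len ` demands K N)) / real B}"

definition lam_subsets :: "nat \<Rightarrow> nat \<Rightarrow> nat set set" where
  "lam_subsets Lam lam = {U. U \<subseteq> {..<Lam} \<and> card U = lam}"

(* B_lambda: connectivity vectors (K_U)_U supported on lam-subsets, summing to K *)
definition ensemble :: "nat \<Rightarrow> nat \<Rightarrow> nat \<Rightarrow> (nat set \<Rightarrow> nat) set" where
  "ensemble K Lam lam =
     {b. (\<forall>U. U \<notin> lam_subsets Lam lam \<longrightarrow> b U = 0) \<and> sum b (lam_subsets Lam lam) = K}"

definition realizes :: "nat \<Rightarrow> (nat set \<Rightarrow> nat) \<Rightarrow> (nat \<Rightarrow> nat set) \<Rightarrow> bool" where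
  "realizes K b conn \<longleftrightarrow> (\<forall>U. card {u. u < K \<and> conn u = U} = b U)"

(* R_b(P): load for connectivity vector b (well defined up to permutation of users) *)
definition load_vec ::
  "nat \<Rightarrow> nat \<Rightarrow> nat \<Rightarrow> (nat \<Rightarrow> nat \<Rightarrow> nat set) \<Rightarrow> (nat set \<Rightarrow> nat) \<Rightarrow> real" where
  "load_vec K N B pl b = load_conn K N B pl (SOME conn. realizes K b conn)"

definition R_avg_opt :: "nat \<Rightarrow> nat \<Rightarrow> nat \<Rightarrow> nat \<Rightarrow> real \<Rightarrow> real" where
  "R_avg_opt N K Lam lam M =
     Inf {r. \<exists>B pl. uncoded_placement Lam N M B pl \<and>
            r = (\<Sum>b\<in>ensemble K Lam lam. load_vec K N B pl b) / real (card (ensemble K Lam lam))}"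

definition pl_interp :: "(nat \<Rightarrow> real) \<Rightarrow> (nat \<Rightarrow> real) \<Rightarrow> nat \<Rightarrow> real \<Rightarrow> real" where
  "pl_interp x y n m =
     (let t = (LEAST t. t < n \<and> m \<le> x (Suc t))
      in y t + (m - x t) / (x (Suc t) - x t) * (y (Suc t) - y t))"

definition ensemble_size :: "nat \<Rightarrow> nat \<Rightarrow> nat \<Rightarrow> nat" where
  "ensemble_size K Lam lam = (K + (Lam choose lam) - 1) choose K"

definition A_term :: "nat \<Rightarrow> nat \<Rightarrow> nat \<Rightarrow> nat \<Rightarrow> real" where
  "A_term K Lam lam t =
     real K / real (ensemble_size K Lam lam) * real ((Lam - t) choose lam) *
     (1 - 1 / real ((t + lam) choose lam))"

definition LB_x :: "nat \<Rightarrow> nat \<Rightarrow> nat \<Rightarrow> real" where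
  "LB_x N Lam t = real t * real N / real Lam"

definition LB_y :: "nat \<Rightarrow> nat \<Rightarrow> nat \<Rightarrow> nat \<Rightarrow> real" where
  "LB_y K Lam lam t =
     real K * real (Lam choose (t + lam)) / (real (Lam choose lam) * real (Lam choose t))
     + A_term K Lam lam t"

definition R_avg_LB :: "nat \<Rightarrow> nat \<Rightarrow> nat \<Rightarrow> nat \<Rightarrow> real \<Rightarrow> real" where
  "R_avg_LB N K Lam lam M = pl_interp (LB_x N Lam) (LB_y K Lam lam) (Lam - lam + 1) M"

end

theory Submission
  imports Defs "HOL-Combinatorics.Permutations" "HOL-Library.Multiset"
begin

text \<open>Fix a placement and a connectivity, and order the users. If every user may also use the
  files requested by the users before it, user \<open>u\<close> still has to learn from the message all bits
  of its file that lie in no cache seen by \<open>u\<close> or an earlier user; so for distinct demands the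
  message is at least as long as the number of these bits. Averaging over the \<open>N\<close> cyclic demands
  removes the demands from the bound. For a connectivity vector, the users are ordered through a
  uniformly random order of the caches: a subfile cached on \<open>T\<close> counts for the users on a cache
  set \<open>U\<close> disjoint from \<open>T\<close> when \<open>U\<close> comes before \<open>T\<close>, which happens with probability
  \<open>1 / ((card T + lam) choose lam)\<close>; if all users share one cache set, every subfile avoiding it
  counts for all of them. Averaging over the ensemble, in which by symmetry every cache set serves
  \<open>K / (Lam choose lam)\<close> users on average, bounds the average load by the mean of the corner
  values at the sizes \<open>card T\<close>, weighted by the subfile sizes. The corner values form a convex
  decreasing sequence and the memory constraint bounds the mean of \<open>card T\<close> by \<open>Lam * M / N\<close>,
  so Jensen's inequality gives the interpolated curve.\<close>

lemma demand_less:
  assumes "d \<in> demands K N" "u < K" shows "d u < N"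
  using PiE_mem[of d "{..<K}" "\<lambda>_. {..<N}" u] assms by (simp add: demands_def)

definition unseen_bits ::
  "nat \<Rightarrow> nat \<Rightarrow> (nat \<Rightarrow> nat \<Rightarrow> nat set) \<Rightarrow> (nat \<Rightarrow> nat set) \<Rightarrow> (nat \<Rightarrow> nat) \<Rightarrow> (nat \<Rightarrow> nat)
   \<Rightarrow> (nat \<times> nat) set" where
  "unseen_bits K B pl conn r d =
     {(d u, i) | u i. u < K \<and> i < B \<and> (\<forall>w<K. r w \<le> r u \<longrightarrow> pl (d u) i \<inter> conn w = {})}"

lemma unseen_bits_subset:
  assumes "d \<in> demands K N"
  shows "unseen_bits K B pl conn r d \<subseteq> {..<N} \<times> {..<B}"
  using assms by (auto simp: unseen_bits_def demands_def)

text \<open>Users are decoded in the order of the ranking \<open>r\<close>: a bit in the cache of user \<open>u\<close>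
  that is unseen is requested by a user ranked strictly before \<open>u\<close>.\<close>
lemma message_determines_library:
  assumes ds: "delivery_scheme K N B pl conn enc len" and d: "d \<in> demands K N"
    and W: "valid_lib N B W" and W': "valid_lib N B W'"
    and outside: "\<And>n i. (n, i) \<notin> unseen_bits K B pl conn r d \<Longrightarrow> W n i = W' n i"
    and msg: "enc d W = enc d W'"
  shows "W = W'"
proof -
  let ?S = "unseen_bits K B pl conn r d"
  have requested: "W (d u) = W' (d u)" if "u < K" for u
    using that
  proof (induction "r u" arbitrary: u rule: less_induct)
    case less
    obtain dec :: "bool list \<Rightarrow> library \<Rightarrow> nat \<Rightarrow> bool" where
      dec: "\<And>W. valid_lib N B W \<Longrightarrow> \<forall>i<B. dec (enc d W) (cache_view N B pl (conn u) W) i = W (d u) i"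
      using ds d less.prems unfolding delivery_scheme_def by blast
    have "W n i = W' n i" if "pl n i \<inter> conn u \<noteq> {}" for n i
    proof (cases "(n, i) \<in> ?S")
      case True
      then obtain w where w: "w < K" "n = d w" and hidden: "\<forall>v<K. r v \<le> r w \<longrightarrow> pl n i \<inter> conn v = {}"
        by (auto simp: unseen_bits_def)
      have "r w < r u" using hidden less.prems that by (meson not_le)
      with less.hyps w show ?thesis by simp
    qed (use outside in simp)
    then have view: "cache_view N B pl (conn u) W = cache_view N B pl (conn u) W'"
      by (auto simp: cache_view_def)
    show ?case
    proof
      fix i
      show "W (d u) i = W' (d u) i"
      proof (cases "i < B")
        case True
        then show ?thesis using dec[OF W] dec[OF W'] msg view by metis
      qed (use W W' in \<open>simp add: valid_lib_def\<close>)
    qed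
  qed
  show ?thesis
  proof (intro ext)
    fix n i
    show "W n i = W' n i"
      using requested outside by (cases "(n, i) \<in> ?S") (auto simp: unseen_bits_def)
  qed
qed

lemma card_unseen_bits_le_length:
  assumes ds: "delivery_scheme K N B pl conn enc len" and d: "d \<in> demands K N"
  shows "card (unseen_bits K B pl conn r d) \<le> len d"
proof -
  let ?S = "unseen_bits K B pl conn r d"
  define lib :: "(nat \<times> nat) set \<Rightarrow> library" where "lib A = (\<lambda>n i. (n, i) \<in> A)" for A
  have S: "?S \<subseteq> {..<N} \<times> {..<B}" by (rule unseen_bits_subset[OF d])
  then have fin: "finite ?S" by (rule finite_subset) auto
  have valid: "valid_lib N B (lib A)" if "A \<subseteq> ?S" for A
    using that S by (auto simp: valid_lib_def lib_def)
  have "inj_on (\<lambda>A. enc d (lib A)) (Pow ?S)"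
  proof (rule inj_onI)
    fix A A' assume "A \<in> Pow ?S" "A' \<in> Pow ?S" "enc d (lib A) = enc d (lib A')"
    then have "lib A = lib A'"
      by (intro message_determines_library[OF ds d valid valid]) (auto simp: lib_def)
    then show "A = A'" by (auto simp: lib_def fun_eq_iff)
  qed
  moreover have "(\<lambda>A. enc d (lib A)) ` Pow ?S \<subseteq> {xs. set xs \<subseteq> UNIV \<and> length xs = len d}"
    using ds d valid unfolding delivery_scheme_def by blast
  ultimately have "card (Pow ?S) \<le> card {xs :: bool list. set xs \<subseteq> UNIV \<and> length xs = len d}"
    by (intro card_inj_on_le) (use finite_lists_length_eq[of "UNIV :: bool set"] in simp_all)
  then have "(2::nat) ^ card ?S \<le> 2 ^ len d"
    using card_lists_length_eq[of "UNIV :: bool set" "len d"] by (simp add: card_Pow fin)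
  then show ?thesis by simp
qed

lemma card_unseen_bits:
  assumes "inj_on d {..<K}"
  shows "card (unseen_bits K B pl conn r d)
    = (\<Sum>u<K. card {i. i < B \<and> (\<forall>w<K. r w \<le> r u \<longrightarrow> pl (d u) i \<inter> conn w = {})})"
proof -
  define I where "I u = {i. i < B \<and> (\<forall>w<K. r w \<le> r u \<longrightarrow> pl (d u) i \<inter> conn w = {})}" for u
  have "unseen_bits K B pl conn r d = (\<Union>u<K. Pair (d u) ` I u)"
    by (auto simp: unseen_bits_def I_def)
  also have "card \<dots> = (\<Sum>u<K. card (Pair (d u) ` I u))"
    using assms by (intro card_UN_disjoint) (auto simp: I_def inj_on_def)
  also have "\<dots> = (\<Sum>u<K. card (I u))"
    by (simp add: card_image inj_on_def)
  finally show ?thesis by (simp add: I_def)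
qed

lemma add_mod_cancel_left:
  fixes a x y N :: nat
  assumes eq: "(a + x) mod N = (a + y) mod N" and "x < N" "y < N"
  shows "x = y"
proof -
  have "(int a + int x) mod int N = (int a + int y) mod int N"
    using eq by (simp flip: of_nat_add zmod_int)
  then have "int x mod int N = int y mod int N"
    by (metis add_diff_cancel_left' mod_diff_left_eq)
  then show ?thesis using assms(2,3) by (simp flip: zmod_int)
qed

lemma bij_betw_add_mod:
  assumes "0 < (N::nat)" shows "bij_betw (\<lambda>x. (a + x) mod N) {..<N} {..<N}"
proof -
  have "inj_on (\<lambda>x. (a + x) mod N) {..<N}"
    by (rule inj_onI) (auto intro: add_mod_cancel_left)
  moreover have "(\<lambda>x. (a + x) mod N) ` {..<N} \<subseteq> {..<N}" using assms by auto
  ultimately show ?thesis by (simp add: bij_betw_def endo_inj_surj)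
qed

definition cyclic_demand :: "nat \<Rightarrow> nat \<Rightarrow> nat \<Rightarrow> nat \<Rightarrow> nat" where
  "cyclic_demand K N s = restrict (\<lambda>u. (u + s) mod N) {..<K}"

lemma cyclic_demand_in_demands: "0 < N \<Longrightarrow> cyclic_demand K N s \<in> demands K N"
  by (auto simp: cyclic_demand_def demands_def)

lemma inj_on_cyclic_demand:
  assumes "K \<le> N" shows "inj_on (cyclic_demand K N s) {..<K}"
proof (rule inj_onI)
  fix u v assume "u \<in> {..<K}" "v \<in> {..<K}" "cyclic_demand K N s u = cyclic_demand K N s v"
  then have "(s + u) mod N = (s + v) mod N" "u < N" "v < N"
    using assms by (auto simp: cyclic_demand_def add.commute)
  then show "u = v" using add_mod_cancel_left by blast
qed

definition hidden_bits ::
  "nat \<Rightarrow> nat \<Rightarrow> nat \<Rightarrow> (nat \<Rightarrow> nat \<Rightarrow> nat set) \<Rightarrow> (nat \<Rightarrow> nat set) \<Rightarrow> (nat \<Rightarrow> nat) \<Rightarrow> nat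
   \<Rightarrow> (nat \<times> nat) set" where
  "hidden_bits K N B pl conn r u =
     {(n, i). n < N \<and> i < B \<and> (\<forall>w<K. r w \<le> r u \<longrightarrow> pl n i \<inter> conn w = {})}"

lemma card_pairs_eq_sum:
  fixes N B :: nat
  shows "card {(n, i). n < N \<and> i < B \<and> P n i} = (\<Sum>n<N. card {i. i < B \<and> P n i})"
proof -
  have "{(n, i). n < N \<and> i < B \<and> P n i} = Sigma {..<N} (\<lambda>n. {i. i < B \<and> P n i})" by auto
  moreover have "finite {i. i < B \<and> P n i}" for n by simp
  ultimately show ?thesis by (simp add: card_SigmaI)
qed

lemma sum_hidden_bits_le_max_length:
  assumes ds: "delivery_scheme K N B pl conn enc len" and KN: "K \<le> N" and N: "0 < N"
  shows "(\<Sum>u<K. card (hidden_bits K N B pl conn r u))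
    \<le> N * Max (len ` demands K N)"
proof -
  define hidden where "hidden u n = card {i. i < B \<and> (\<forall>w<K. r w \<le> r u \<longrightarrow> pl n i \<inter> conn w = {})}"
    for u n
  have "(\<Sum>u<K. card (hidden_bits K N B pl conn r u))
      = (\<Sum>u<K. \<Sum>n<N. hidden u n)"
    by (simp add: hidden_bits_def card_pairs_eq_sum hidden_def)
  also have "\<dots> = (\<Sum>u<K. \<Sum>s<N. hidden u ((u + s) mod N))"
    by (intro sum.cong refl sum.reindex_bij_betw[OF bij_betw_add_mod[OF N], symmetric])
  also have "\<dots> = (\<Sum>s<N. card (unseen_bits K B pl conn r (cyclic_demand K N s)))"
    unfolding card_unseen_bits[OF inj_on_cyclic_demand[OF KN]]
    by (subst sum.swap) (simp add: hidden_def cyclic_demand_def)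
  also have "\<dots> \<le> (\<Sum>s<N. Max (len ` demands K N))"
  proof (intro sum_mono order.trans[OF card_unseen_bits_le_length[OF ds]] Max_ge)
    show "finite (len ` demands K N)" by (simp add: demands_def finite_PiE)
  qed (auto intro: cyclic_demand_in_demands[OF N])
  finally show ?thesis by simp
qed

lemma delivery_scheme_whole_library:
  "delivery_scheme K N B pl conn (\<lambda>d W. map (\<lambda>j. W (j div B) (j mod B)) [0..<N * B]) (\<lambda>d. N * B)"
  unfolding delivery_scheme_def
proof (intro ballI conjI allI impI)
  fix d u assume d: "d \<in> demands K N" and u: "u < K"
  have index: "d u * B + i < N * B" if "i < B" for i
  proof -
    have "d u * B + i < Suc (d u) * B" using that by simp
    also have "\<dots> \<le> N * B" using demand_less[OF d u] by (intro mult_right_mono) auto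
    finally show ?thesis .
  qed
  show "\<exists>dec. \<forall>W. valid_lib N B W \<longrightarrow> (\<forall>i<B. dec (map (\<lambda>j. W (j div B) (j mod B)) [0..<N * B])
      (cache_view N B pl (conn u) W) i = W (d u) i)"
    by (intro exI[of _ "\<lambda>xs V i. xs ! (d u * B + i)"]) (simp add: index)
qed simp

lemma load_conn_ge_hidden_bits:
  assumes B: "0 < B" and KN: "K \<le> N" and N: "0 < N"
  shows "real (\<Sum>u<K. card (hidden_bits K N B pl conn r u))
    / (real N * real B) \<le> load_conn K N B pl conn"
  unfolding load_conn_def
proof (rule cInf_greatest)
  show "{r. \<exists>enc len. delivery_scheme K N B pl conn enc len \<and> r = real (Max (len ` demands K N)) / real B} \<noteq> {}"
    using delivery_scheme_whole_library by blast
next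
  fix x assume "x \<in> {r. \<exists>enc len. delivery_scheme K N B pl conn enc len \<and> r = real (Max (len ` demands K N)) / real B}"
  then obtain enc len where ds: "delivery_scheme K N B pl conn enc len"
    and x: "x = real (Max (len ` demands K N)) / real B" by blast
  let ?hidden = "\<Sum>u<K. card (hidden_bits K N B pl conn r u)"
  have "real ?hidden \<le> real N * real (Max (len ` demands K N))"
    using sum_hidden_bits_le_max_length[OF ds KN N, of r] of_nat_mono by fastforce
  then have "real ?hidden / (real N * real B) \<le> real N * real (Max (len ` demands K N)) / (real N * real B)"
    by (rule divide_right_mono) simp
  also have "\<dots> = x" using N by (simp add: x)
  finally show "real ?hidden / (real N * real B) \<le> x" .
qed

lemma finite_lam_subsets: "finite (lam_subsets Lam lam)"
  unfolding lam_subsets_def by (rule finite_subset[of _ "Pow {..<Lam}"]) auto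

lemma card_lam_subsets: "card (lam_subsets Lam lam) = Lam choose lam"
  unfolding lam_subsets_def using n_subsets[of "{..<Lam}" lam] by simp

lemma lam_subsetsD:
  assumes "U \<in> lam_subsets Lam lam"
  shows "U \<subseteq> {..<Lam}" "finite U" "card U = lam"
  using assms unfolding lam_subsets_def by (auto intro: finite_subset[of _ "{..<Lam}"])

lemma ensemble_support:
  assumes "b \<in> ensemble K Lam lam" "0 < b U"
  shows "U \<in> lam_subsets Lam lam"
proof -
  have "\<forall>U. U \<notin> lam_subsets Lam lam \<longrightarrow> b U = 0" using assms(1) by (simp add: ensemble_def)
  then show ?thesis using assms(2) by (cases "U \<in> lam_subsets Lam lam") simp_all
qed

lemma size_eq_sum_count:
  assumes "set_mset X \<subseteq> A" "finite A"
  shows "size X = sum (count X) A"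
  unfolding size_multiset_overloaded_eq
  by (rule sum.mono_neutral_left) (use assms in \<open>auto simp: count_eq_zero_iff\<close>)

lemma bij_betw_count_ensemble:
  "bij_betw count (multisets_of_size (lam_subsets Lam lam) K) (ensemble K Lam lam)"
proof (rule bij_betw_byWitness[where f' = Abs_multiset])
  have fin_support: "finite {U. 0 < b U}" if "b \<in> ensemble K Lam lam" for b
    using that by (intro finite_subset[OF _ finite_lam_subsets]) (auto intro: ensemble_support)
  show "\<forall>b\<in>ensemble K Lam lam. count (Abs_multiset b) = b"
    using fin_support by (simp add: count_Abs_multiset)
  show "Abs_multiset ` ensemble K Lam lam \<subseteq> multisets_of_size (lam_subsets Lam lam) K"
  proof
    fix X assume "X \<in> Abs_multiset ` ensemble K Lam lam"
    then obtain b where b: "b \<in> ensemble K Lam lam" and X: "X = Abs_multiset b" by blast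
    have count: "count X = b" using X fin_support[OF b] by (simp add: count_Abs_multiset)
    have set: "set_mset X \<subseteq> lam_subsets Lam lam"
      using ensemble_support[OF b] count by auto
    have "size X = K"
      using b count by (simp add: size_eq_sum_count[OF set finite_lam_subsets] ensemble_def)
    with set show "X \<in> multisets_of_size (lam_subsets Lam lam) K" by (simp add: multisets_of_size_def)
  qed
  show "count ` multisets_of_size (lam_subsets Lam lam) K \<subseteq> ensemble K Lam lam"
  proof
    fix b assume "b \<in> count ` multisets_of_size (lam_subsets Lam lam) K"
    then obtain X where set: "set_mset X \<subseteq> lam_subsets Lam lam" and "size X = K" "b = count X"
      by (auto simp: multisets_of_size_def)
    moreover have "count X U = 0" if "U \<notin> lam_subsets Lam lam" for U
      using set that by (auto simp: count_eq_zero_iff)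
    ultimately show "b \<in> ensemble K Lam lam"
      by (simp add: ensemble_def size_eq_sum_count[OF set finite_lam_subsets])
  qed
qed (simp add: count_inverse)

lemma finite_ensemble: "finite (ensemble K Lam lam)"
  using bij_betw_finite[OF bij_betw_count_ensemble] finite_multisets_of_size[OF finite_lam_subsets]
  by blast

lemma card_ensemble: "card (ensemble K Lam lam) = ensemble_size K Lam lam"
  using bij_betw_same_card[OF bij_betw_count_ensemble, of Lam lam K]
    card_multisets_of_size[OF finite_lam_subsets, of Lam lam K]
  by (simp add: card_lam_subsets ensemble_size_def add.commute)

lemma realizes_exists:
  assumes "b \<in> ensemble K Lam lam"
  shows "\<exists>conn. realizes K b conn"
proof -
  have "b \<in> count ` multisets_of_size (lam_subsets Lam lam) K"
    using bij_betw_imp_surj_on[OF bij_betw_count_ensemble, of Lam lam K] assms by simp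
  then obtain X where X: "X \<in> multisets_of_size (lam_subsets Lam lam) K" "count X = b" by blast
  obtain xs where xs: "mset xs = X" using ex_mset by blast
  have len: "length xs = K" using X(1) xs by (auto simp: multisets_of_size_def)
  have "card {u. u < K \<and> xs ! u = U} = b U" for U
  proof -
    have "b U = length (filter ((=) U) xs)"
      using X(2) xs count_mset[of xs U] by (simp add: count_list_eq_length_filter)
    also have "\<dots> = card {u. u < K \<and> xs ! u = U}"
      by (simp add: length_filter_conv_card len eq_commute)
    finally show ?thesis by simp
  qed
  then show ?thesis unfolding realizes_def by blast
qed

lemma realizes_fibre:
  "realizes K b conn \<Longrightarrow> card {u \<in> {..<K}. conn u = U} = b U"
  unfolding realizes_def by (simp add: conj_commute)

lemma realizes_positive:
  assumes "realizes K b conn" "u < K"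
  shows "0 < b (conn u)"
proof -
  have "u \<in> {v \<in> {..<K}. conn v = conn u}" using assms(2) by simp
  then have "0 < card {v \<in> {..<K}. conn v = conn u}" by (auto simp: card_gt_0_iff)
  then show ?thesis using realizes_fibre[OF assms(1)] by simp
qed

lemma sum_users_eq_sum_lam_subsets:
  fixes f :: "nat set \<Rightarrow> 'a::comm_semiring_1"
  assumes b: "b \<in> ensemble K Lam lam" and r: "realizes K b conn"
  shows "(\<Sum>u<K. f (conn u)) = (\<Sum>U\<in>lam_subsets Lam lam. of_nat (b U) * f U)"
proof -
  have "conn ` {..<K} \<subseteq> lam_subsets Lam lam"
    using ensemble_support[OF b] realizes_positive[OF r] by auto
  then have "(\<Sum>u<K. f (conn u)) = (\<Sum>U\<in>lam_subsets Lam lam. \<Sum>u\<in>{u \<in> {..<K}. conn u = U}. f (conn u))"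
    by (rule sum.group[OF finite_lessThan finite_lam_subsets, symmetric])
  also have "\<dots> = (\<Sum>U\<in>lam_subsets Lam lam. of_nat (b U) * f U)"
    by (intro sum.cong refl) (simp add: realizes_fibre[OF r, symmetric])
  finally show ?thesis .
qed

definition precedes :: "(nat \<Rightarrow> nat) \<Rightarrow> nat set \<Rightarrow> nat set \<Rightarrow> bool" where
  "precedes p U T \<longleftrightarrow> (\<forall>x\<in>U. \<forall>y\<in>T. p x < p y)"

lemma nat_discrete_ivt:
  fixes f :: "nat \<Rightarrow> nat"
  assumes "f 0 \<le> k" "k \<le> f n" "\<And>i. f (Suc i) \<le> Suc (f i)"
  shows "\<exists>i. f i = k"
  using assms(1,2)
proof (induction n)
  case (Suc n)
  show ?case
  proof (cases "k \<le> f n")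
    case False
    then have "f (Suc n) = k" using Suc.prems assms(3)[of n] by linarith
    then show ?thesis by blast
  qed (use Suc in auto)
qed auto

lemma card_less_threshold_exists:
  fixes Z :: "nat set"
  assumes "finite Z" "k \<le> card Z"
  shows "\<exists>\<theta>. card {z\<in>Z. z < \<theta>} = k"
proof (rule nat_discrete_ivt)
  have "{z\<in>Z. z < Suc (Max Z)} = Z" using assms(1) by (auto simp: less_Suc_eq_le)
  then show "k \<le> card {z\<in>Z. z < Suc (Max Z)}" using assms(2) by simp
  show "card {z\<in>Z. z < Suc i} \<le> Suc (card {z\<in>Z. z < i})" for i
  proof -
    have "card {z\<in>Z. z < Suc i} \<le> card (insert i {z\<in>Z. z < i})"
      by (intro card_mono) (use assms(1) in auto)
    also have "\<dots> \<le> Suc (card {z\<in>Z. z < i})" by (simp add: card_insert_le_m1)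
    finally show ?thesis .
  qed
qed simp

lemma precedes_split_exists:
  assumes p: "inj_on p A" and A: "finite A" and k: "k \<le> card A"
  shows "\<exists>U. U \<subseteq> A \<and> card U = k \<and> precedes p U (A - U)"
proof -
  obtain \<theta> where \<theta>: "card {z \<in> p ` A. z < \<theta>} = k"
    using card_less_threshold_exists[of "p ` A" k] A k card_image[OF p] by auto
  define U where "U = {x\<in>A. p x < \<theta>}"
  have "p ` U = {z \<in> p ` A. z < \<theta>}" by (auto simp: U_def)
  moreover have "card (p ` U) = card U" using p by (intro card_image) (auto simp: U_def intro: inj_on_subset)
  ultimately have "card U = k" using \<theta> by simp
  moreover have "precedes p U (A - U)" by (auto simp: precedes_def U_def)
  ultimately show ?thesis by (intro exI[of _ U]) (auto simp: U_def)
qed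

lemma precedes_split_unique:
  assumes "finite A" "U \<subseteq> A" "U' \<subseteq> A" "card U = card U'"
    and "precedes p U (A - U)" "precedes p U' (A - U')"
  shows "U = U'"
proof (rule ccontr)
  assume "U \<noteq> U'"
  have fin: "finite U" "finite U'" using assms(1-3) by (auto intro: finite_subset)
  have "\<not> U \<subseteq> U'" "\<not> U' \<subseteq> U"
    using card_subset_eq[OF fin(2), of U] card_subset_eq[OF fin(1), of U'] assms(4) \<open>U \<noteq> U'\<close> by auto
  then obtain x y where "x \<in> U - U'" "y \<in> U' - U" by blast
  with assms have "p x < p y" "p y < p x" unfolding precedes_def by blast+
  then show False by simp
qed

text \<open>Composing with a permutation of \<open>A\<close> that maps \<open>U'\<close> onto \<open>U\<close>.\<close>
lemma card_permutes_precedes_eq: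
  assumes S: "finite S" and AS: "A \<subseteq> S" and U: "U \<subseteq> A" and U': "U' \<subseteq> A"
    and card: "card U' = card U"
  shows "card {p. p permutes S \<and> precedes p U' (A - U')} = card {p. p permutes S \<and> precedes p U (A - U)}"
proof -
  have A: "finite A" using S AS by (rule finite_subset[rotated])
  obtain g1 where g1: "bij_betw g1 U' U"
    using finite_same_card_bij[OF finite_subset[OF U' A] finite_subset[OF U A] card] by blast
  have "card (A - U') = card (A - U)" using card U U' A by (simp add: card_Diff_subset finite_subset)
  then obtain g2 where g2: "bij_betw g2 (A - U') (A - U)"
    using finite_same_card_bij[of "A - U'" "A - U"] A by auto
  define f where "f x = (if x \<in> U' then g1 x else if x \<in> A then g2 x else x)" for x
  have fU': "bij_betw f U' U" using g1 by (rule bij_betw_cong[THEN iffD1, rotated]) (auto simp: f_def)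
  have fAU': "bij_betw f (A - U') (A - U)" using g2 by (rule bij_betw_cong[THEN iffD1, rotated]) (auto simp: f_def)
  have "bij_betw f (U' \<union> (A - U')) (U \<union> (A - U))" using fU' fAU' by (rule bij_betw_combine) auto
  then have "bij_betw f A A" using U U' by (simp add: Un_absorb1 Un_Diff_cancel)
  then have "f permutes A" by (rule bij_imp_permutes) (auto simp: f_def U'[THEN subsetD])
  then have f: "f permutes S" using AS by (rule permutes_subset)
  have images: "f ` U' = U" "f ` (A - U') = A - U" using fU' fAU' by (auto simp: bij_betw_def)
  then have inv_images: "inv f ` U = U'" "inv f ` (A - U) = A - U'"
    by (metis image_inv_f_f[OF permutes_inj[OF f]])+
  define E where "E V = {p. p permutes S \<and> precedes p V (A - V)}" for V
  have "bij_betw (\<lambda>p. p \<circ> f) (E U) (E U')"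
  proof (rule bij_betwI[where g = "\<lambda>p. p \<circ> inv f"])
    show "(\<lambda>p. p \<circ> f) \<in> E U \<rightarrow> E U'"
    proof
      fix p assume "p \<in> E U"
      then show "p \<circ> f \<in> E U'"
        using images permutes_compose[OF f] unfolding E_def precedes_def by (simp add: image_subset_iff) blast
    qed
    show "(\<lambda>p. p \<circ> inv f) \<in> E U' \<rightarrow> E U"
    proof
      fix p assume "p \<in> E U'"
      then show "p \<circ> inv f \<in> E U"
        using inv_images permutes_compose[OF permutes_inv[OF f]] unfolding E_def precedes_def
        by (simp add: image_subset_iff) blast
    qed
  qed (use permutes_inv_o[OF f] in \<open>simp_all add: o_assoc[symmetric]\<close>)
  then show ?thesis by (simp add: bij_betw_same_card E_def)
qed

text \<open>Each permutation of \<open>S\<close> puts exactly one \<open>card U\<close>-subset of \<open>U \<union> T\<close> in front of the rest.\<close>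
lemma card_permutes_precedes:
  assumes S: "finite S" and U: "U \<subseteq> S" and T: "T \<subseteq> S" and disj: "U \<inter> T = {}"
  shows "card {p. p permutes S \<and> precedes p U T} * (card (U \<union> T) choose card U) = fact (card S)"
proof -
  define A where "A = U \<union> T"
  define F where "F = {U'. U' \<subseteq> A \<and> card U' = card U}"
  define E where "E U' = {p. p permutes S \<and> precedes p U' (A - U')}" for U'
  have A: "finite A" "A \<subseteq> S" using S U T by (auto simp: A_def intro: finite_subset)
  have T_eq: "T = A - U" using disj by (auto simp: A_def)
  have "{p. p permutes S} = (\<Union>U'\<in>F. E U')"
  proof (intro equalityI subsetI)
    fix p assume "p \<in> {p. p permutes S}"
    then have "inj_on p A" by (auto intro: inj_on_subset permutes_inj)
    moreover have "card U \<le> card A" using A by (simp add: A_def card_mono)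
    ultimately show "p \<in> (\<Union>U'\<in>F. E U')"
      using precedes_split_exists[of p A "card U"] A \<open>p \<in> _\<close> by (auto simp: F_def E_def)
  qed (auto simp: E_def)
  then have "fact (card S) = card (\<Union>U'\<in>F. E U')" using card_permutations[OF refl S] by simp
  also have "\<dots> = (\<Sum>U'\<in>F. card (E U'))"
  proof (rule card_UN_disjoint)
    show "finite F" using A by (simp add: F_def)
    show "\<forall>U'\<in>F. finite (E U')"
      using finite_permutations[OF S] by (auto simp: E_def intro: finite_subset[rotated])
    show "\<forall>U'\<in>F. \<forall>U''\<in>F. U' \<noteq> U'' \<longrightarrow> E U' \<inter> E U'' = {}"
    proof (intro ballI impI)
      fix U' U'' assume "U' \<in> F" "U'' \<in> F" "U' \<noteq> U''"
      then show "E U' \<inter> E U'' = {}"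
        using precedes_split_unique[OF A(1), of U' U''] by (auto simp: F_def E_def)
    qed
  qed
  also have "\<dots> = (\<Sum>U'\<in>F. card (E U))"
    using card_permutes_precedes_eq[OF S A(2)] U by (intro sum.cong) (auto simp: F_def E_def A_def)
  also have "\<dots> = card (E U) * (card A choose card U)" using A by (simp add: F_def n_subsets)
  also have "E U = {p. p permutes S \<and> precedes p U T}" by (simp add: E_def T_eq)
  finally show ?thesis by (simp add: A_def)
qed

definition subfile_size :: "nat \<Rightarrow> nat \<Rightarrow> (nat \<Rightarrow> nat \<Rightarrow> nat set) \<Rightarrow> nat set \<Rightarrow> nat" where
  "subfile_size N B pl T = card {(n, i). n < N \<and> i < B \<and> pl n i = T}"

lemma card_bits_eq_sum_subfile_size:
  assumes pl: "\<forall>n<N. \<forall>i<B. pl n i \<subseteq> {..<Lam}"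
  shows "real (card {(n, i). n < N \<and> i < B \<and> P (pl n i)})
    = (\<Sum>T\<in>Pow {..<Lam}. if P T then real (subfile_size N B pl T) else 0)"
proof -
  have "{(n, i). n < N \<and> i < B \<and> P (pl n i)}
      = (\<Union>T\<in>{T\<in>Pow {..<Lam}. P T}. {(n, i). n < N \<and> i < B \<and> pl n i = T})"
    using pl by auto
  moreover have "finite {(n, i). n < N \<and> i < B \<and> pl n i = T}" for T
    by (rule finite_subset[of _ "{..<N} \<times> {..<B}"]) auto
  ultimately have "real (card {(n, i). n < N \<and> i < B \<and> P (pl n i)})
      = (\<Sum>T\<in>{T\<in>Pow {..<Lam}. P T}. real (subfile_size N B pl T))"
    unfolding subfile_size_def by (simp add: card_UN_disjoint disjoint_iff flip: of_nat_sum)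
  also have "\<dots> = (\<Sum>T\<in>Pow {..<Lam}. if P T then real (subfile_size N B pl T) else 0)"
    by (rule sum.inter_filter) simp
  finally show ?thesis .
qed

definition avoiding_mass :: "nat \<Rightarrow> (nat set \<Rightarrow> real) \<Rightarrow> nat set \<Rightarrow> real" where
  "avoiding_mass Lam g U = (\<Sum>T\<in>Pow {..<Lam}. if U \<inter> T = {} then g T else 0)"

text \<open>The hypothesis says that a bit whose cache set \<open>T\<close> satisfies \<open>G U T\<close> is invisible to
  every user connected to a cache set ranked by \<open>R\<close> no higher than \<open>U\<close>.\<close>
lemma load_vec_ge_ranked:
  fixes R :: "nat set \<Rightarrow> nat"
  assumes B: "0 < B" and KN: "K \<le> N" and N: "0 < N" and b: "b \<in> ensemble K Lam lam"
    and hidden: "\<And>U T V. U \<in> lam_subsets Lam lam \<Longrightarrow> 0 < b U \<Longrightarrow> G U T \<Longrightarrow> V \<in> lam_subsets Lam lam \<Longrightarrow>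
      0 < b V \<Longrightarrow> R V \<le> R U \<Longrightarrow> T \<inter> V = {}"
  shows "real (\<Sum>U\<in>lam_subsets Lam lam. b U * card {(n, i). n < N \<and> i < B \<and> G U (pl n i)})
    / (real N * real B) \<le> load_vec K N B pl b"
proof -
  define conn where "conn = (SOME conn. realizes K b conn)"
  have r: "realizes K b conn" unfolding conn_def using realizes_exists[OF b] by (rule someI_ex)
  have conn: "conn u \<in> lam_subsets Lam lam" "0 < b (conn u)" if "u < K" for u
    using realizes_positive[OF r that] ensemble_support[OF b] by auto
  let ?hidden = "\<Sum>u<K. card (hidden_bits K N B pl conn (R \<circ> conn) u)"
  have "(\<Sum>U\<in>lam_subsets Lam lam. b U * card {(n, i). n < N \<and> i < B \<and> G U (pl n i)})
      = (\<Sum>u<K. card {(n, i). n < N \<and> i < B \<and> G (conn u) (pl n i)})"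
    using sum_users_eq_sum_lam_subsets[OF b r, of "\<lambda>U. card {(n, i). n < N \<and> i < B \<and> G U (pl n i)}"]
    by simp
  also have "\<dots> \<le> ?hidden"
  proof (intro sum_mono card_mono subsetI)
    fix u x assume u: "u \<in> {..<K}" and x_mem: "x \<in> {(n, i). n < N \<and> i < B \<and> G (conn u) (pl n i)}"
    obtain n i where x: "x = (n, i)" by (cases x)
    with x_mem have bit: "n < N" "i < B" and G: "G (conn u) (pl n i)" by simp_all
    have "pl n i \<inter> conn w = {}" if "w < K" "R (conn w) \<le> R (conn u)" for w
      using u hidden[OF conn[of u] G conn[OF that(1)] that(2)] by simp
    with x bit show "x \<in> hidden_bits K N B pl conn (R \<circ> conn) u"
      by (simp add: hidden_bits_def)
  qed (rule finite_subset[of _ "{..<N} \<times> {..<B}"], auto simp: hidden_bits_def)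
  finally have "real (\<Sum>U\<in>lam_subsets Lam lam. b U * card {(n, i). n < N \<and> i < B \<and> G U (pl n i)})
      / (real N * real B) \<le> real ?hidden / (real N * real B)"
    by (intro divide_right_mono of_nat_mono) auto
  also have "\<dots> \<le> load_conn K N B pl conn" by (rule load_conn_ge_hidden_bits[OF B KN N])
  finally show ?thesis by (simp add: load_vec_def conn_def)
qed

lemma sum_powers_of_two_less:
  fixes p :: "nat \<Rightarrow> nat"
  assumes "inj_on p U" "finite V" "x \<in> V" "\<forall>y\<in>U. p y < p x"
  shows "(\<Sum>y\<in>U. (2::nat) ^ p y) < (\<Sum>y\<in>V. 2 ^ p y)"
proof -
  have "(\<Sum>y\<in>U. (2::nat) ^ p y) = (\<Sum>j\<in>p ` U. 2 ^ j)" using assms(1) by (simp add: sum.reindex)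
  also have "\<dots> \<le> (\<Sum>j<p x. 2 ^ j)" using assms(4) by (intro sum_mono2) auto
  also have "\<dots> < 2 ^ p x"
  proof -
    have "(\<Sum>j<n. (2::nat) ^ j) < 2 ^ n" for n by (induction n) auto
    then show ?thesis .
  qed
  also have "\<dots> \<le> (\<Sum>y\<in>V. 2 ^ p y)" by (rule member_le_sum) (use assms in auto)
  finally show ?thesis .
qed

text \<open>Ranking a cache set by the sum of \<open>2 ^ p y\<close> over its elements \<open>y\<close> places it above \<open>U\<close>
  as soon as it contains an element that \<open>p\<close> puts after all of \<open>U\<close>.\<close>
lemma load_vec_ge_precedes:
  assumes B: "0 < B" and KN: "K \<le> N" and N: "0 < N" and b: "b \<in> ensemble K Lam lam"
    and p: "p permutes {..<Lam}" and pl: "\<forall>n<N. \<forall>i<B. pl n i \<subseteq> {..<Lam}"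
  shows "(\<Sum>U\<in>lam_subsets Lam lam. real (b U) *
      avoiding_mass Lam (\<lambda>T. if precedes p U T then real (subfile_size N B pl T) else 0) U)
    \<le> load_vec K N B pl b * (real N * real B)"
proof -
  define R where "R V = (\<Sum>y\<in>V. (2::nat) ^ p y)" for V
  have hidden: "T \<inter> V = {}" if "U \<in> lam_subsets Lam lam" "0 < b U" "U \<inter> T = {} \<and> precedes p U T"
    "V \<in> lam_subsets Lam lam" "0 < b V" "R V \<le> R U" for U T V
  proof (rule ccontr)
    assume "T \<inter> V \<noteq> {}"
    then obtain x where "x \<in> T" "x \<in> V" by auto
    then have "R U < R V" unfolding R_def using that(3)
      by (intro sum_powers_of_two_less inj_on_subset[OF permutes_inj[OF p]] lam_subsetsD(2)[OF that(4)])
        (auto simp: precedes_def)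
    with that(6) show False by simp
  qed
  have "real (\<Sum>U\<in>lam_subsets Lam lam. b U * card {(n, i). n < N \<and> i < B \<and>
      U \<inter> pl n i = {} \<and> precedes p U (pl n i)}) / (real N * real B) \<le> load_vec K N B pl b"
    by (rule load_vec_ge_ranked[OF B KN N b, where R = R and G = "\<lambda>U T. U \<inter> T = {} \<and> precedes p U T"])
      (rule hidden)
  moreover have "real (card {(n, i). n < N \<and> i < B \<and> U \<inter> pl n i = {} \<and> precedes p U (pl n i)})
      = avoiding_mass Lam (\<lambda>T. if precedes p U T then real (subfile_size N B pl T) else 0) U" for U
    unfolding card_bits_eq_sum_subfile_size[OF pl, of "\<lambda>T. U \<inter> T = {} \<and> precedes p U T"] avoiding_mass_def
    by (intro sum.cong) auto
  ultimately show ?thesis using B N by (simp add: divide_le_eq of_nat_sum)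
qed

lemma sum_permutes_avoiding_mass:
  assumes U: "U \<in> lam_subsets Lam lam"
  shows "(\<Sum>p\<in>{p. p permutes {..<Lam}}. avoiding_mass Lam (\<lambda>T. if precedes p U T then c T else 0) U)
    = fact Lam * avoiding_mass Lam (\<lambda>T. c T / real ((card T + lam) choose lam)) U"
proof -
  have count: "(\<Sum>p\<in>{p. p permutes {..<Lam}}. if precedes p U T then c T else 0)
      = fact Lam * (c T / real ((card T + lam) choose lam))"
    if T: "T \<subseteq> {..<Lam}" and disj: "U \<inter> T = {}" for T
  proof -
    have "card (U \<union> T) = card T + lam"
      using lam_subsetsD[OF U] T disj by (simp add: card_Un_disjoint finite_subset)
    then have "card {p. p permutes {..<Lam} \<and> precedes p U T} * ((card T + lam) choose lam) = fact Lam"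
      using card_permutes_precedes[OF finite_lessThan lam_subsetsD(1)[OF U] T disj] lam_subsetsD(3)[OF U]
      by simp
    then have "real (card {p. p permutes {..<Lam} \<and> precedes p U T}) * real ((card T + lam) choose lam)
        = fact Lam"
      by (metis of_nat_fact of_nat_mult)
    moreover have "(\<Sum>p\<in>{p. p permutes {..<Lam}}. if precedes p U T then c T else 0)
        = real (card {p. p permutes {..<Lam} \<and> precedes p U T}) * c T"
      using sum.inter_filter[of "{p. p permutes {..<Lam}}" "\<lambda>_. c T" "\<lambda>p. precedes p U T"]
      by (simp add: finite_permutations)
    ultimately show ?thesis by (simp add: field_simps)
  qed
  have "(\<Sum>p\<in>{p. p permutes {..<Lam}}. avoiding_mass Lam (\<lambda>T. if precedes p U T then c T else 0) U)
      = (\<Sum>T\<in>Pow {..<Lam}. if U \<inter> T = {} then \<Sum>p\<in>{p. p permutes {..<Lam}}. if precedes p U T then c T else 0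
          else 0)"
  proof -
    have "(\<Sum>p\<in>P. if U \<inter> T = {} then g p else 0) = (if U \<inter> T = {} then \<Sum>p\<in>P. g p else 0)"
      for P T and g :: "(nat \<Rightarrow> nat) \<Rightarrow> real" by simp
    then show ?thesis unfolding avoiding_mass_def by (subst sum.swap) (simp only:)
  qed
  also have "\<dots> = fact Lam * avoiding_mass Lam (\<lambda>T. c T / real ((card T + lam) choose lam)) U"
    unfolding avoiding_mass_def sum_distrib_left by (intro sum.cong refl) (simp add: count)
  finally show ?thesis .
qed

lemma load_vec_ge_avoiding_mass:
  assumes B: "0 < B" and KN: "K \<le> N" and N: "0 < N" and b: "b \<in> ensemble K Lam lam"
    and pl: "\<forall>n<N. \<forall>i<B. pl n i \<subseteq> {..<Lam}"
  shows "(\<Sum>U\<in>lam_subsets Lam lam. real (b U) *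
      avoiding_mass Lam (\<lambda>T. real (subfile_size N B pl T) / real ((card T + lam) choose lam)) U)
    \<le> load_vec K N B pl b * (real N * real B)"
proof -
  let ?P = "{p. p permutes {..<Lam}}"
  let ?c = "\<lambda>T. real (subfile_size N B pl T)"
  have "fact Lam * (\<Sum>U\<in>lam_subsets Lam lam. real (b U) *
      avoiding_mass Lam (\<lambda>T. ?c T / real ((card T + lam) choose lam)) U)
    = (\<Sum>U\<in>lam_subsets Lam lam. real (b U) *
      (fact Lam * avoiding_mass Lam (\<lambda>T. ?c T / real ((card T + lam) choose lam)) U))"
    by (simp add: sum_distrib_left mult.left_commute)
  also have "\<dots> = (\<Sum>U\<in>lam_subsets Lam lam. real (b U) *
      (\<Sum>p\<in>?P. avoiding_mass Lam (\<lambda>T. if precedes p U T then ?c T else 0) U))"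
    by (intro sum.cong refl) (simp add: sum_permutes_avoiding_mass)
  also have "\<dots> = (\<Sum>p\<in>?P. \<Sum>U\<in>lam_subsets Lam lam. real (b U) *
      avoiding_mass Lam (\<lambda>T. if precedes p U T then ?c T else 0) U)"
    by (subst sum.swap) (simp add: sum_distrib_left)
  also have "\<dots> \<le> (\<Sum>p\<in>?P. load_vec K N B pl b * (real N * real B))"
    by (intro sum_mono load_vec_ge_precedes[OF B KN N b _ pl]) simp
  also have "\<dots> = fact Lam * (load_vec K N B pl b * (real N * real B))"
    by (simp add: card_permutations)
  finally show ?thesis by (simp add: mult_le_cancel_left_pos)
qed

definition concentrated :: "nat \<Rightarrow> nat set \<Rightarrow> nat set \<Rightarrow> nat" where
  "concentrated K U0 = (\<lambda>V. if V = U0 then K else 0)"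

lemma concentrated_in_ensemble:
  "U0 \<in> lam_subsets Lam lam \<Longrightarrow> concentrated K U0 \<in> ensemble K Lam lam"
  unfolding ensemble_def concentrated_def using finite_lam_subsets by auto

lemma inj_on_concentrated: "0 < K \<Longrightarrow> inj_on (concentrated K) A"
  unfolding concentrated_def inj_on_def by (metis less_irrefl)

lemma load_vec_ge_concentrated:
  assumes B: "0 < B" and KN: "K \<le> N" and N: "0 < N" and U0: "U0 \<in> lam_subsets Lam lam"
    and pl: "\<forall>n<N. \<forall>i<B. pl n i \<subseteq> {..<Lam}"
  shows "real K * avoiding_mass Lam (\<lambda>T. real (subfile_size N B pl T)) U0
    \<le> load_vec K N B pl (concentrated K U0) * (real N * real B)"
proof -
  have "real (\<Sum>U\<in>lam_subsets Lam lam. concentrated K U0 U * card {(n, i). n < N \<and> i < B \<and> U \<inter> pl n i = {}})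
      / (real N * real B) \<le> load_vec K N B pl (concentrated K U0)"
    by (rule load_vec_ge_ranked[OF B KN N concentrated_in_ensemble[OF U0], where R = "\<lambda>_. 0"])
      (auto simp: concentrated_def split: if_splits)
  moreover have "(\<Sum>U\<in>lam_subsets Lam lam. concentrated K U0 U * card {(n, i). n < N \<and> i < B \<and> U \<inter> pl n i = {}})
      = K * card {(n, i). n < N \<and> i < B \<and> U0 \<inter> pl n i = {}}"
  proof -
    have "(\<Sum>U\<in>lam_subsets Lam lam. concentrated K U0 U * card {(n, i). n < N \<and> i < B \<and> U \<inter> pl n i = {}})
        = (\<Sum>U\<in>lam_subsets Lam lam. if U = U0 then K * card {(n, i). n < N \<and> i < B \<and> U \<inter> pl n i = {}} else 0)"
      by (intro sum.cong) (auto simp: concentrated_def)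
    then show ?thesis using U0 by (simp add: finite_lam_subsets)
  qed
  moreover have "real (card {(n, i). n < N \<and> i < B \<and> U0 \<inter> pl n i = {}})
      = avoiding_mass Lam (\<lambda>T. real (subfile_size N B pl T)) U0"
    unfolding avoiding_mass_def by (rule card_bits_eq_sum_subfile_size[OF pl])
  ultimately show ?thesis using B N by (simp add: divide_le_eq)
qed

lemma sum_ensemble_apply_eq:
  assumes U: "U \<in> lam_subsets Lam lam" and V: "V \<in> lam_subsets Lam lam"
  shows "(\<Sum>b\<in>ensemble K Lam lam. b U) = (\<Sum>b\<in>ensemble K Lam lam. b V)"
proof -
  let ?\<tau> = "Transposition.transpose U V"
  have "b \<circ> ?\<tau> \<in> ensemble K Lam lam" if "b \<in> ensemble K Lam lam" for b
  proof -
    have "bij_betw ?\<tau> (lam_subsets Lam lam) (lam_subsets Lam lam)"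
      using U V by (intro bij_betwI[where g = ?\<tau>]) (auto simp: transpose_def)
    then have "(\<Sum>W\<in>lam_subsets Lam lam. b (?\<tau> W)) = sum b (lam_subsets Lam lam)"
      by (rule sum.reindex_bij_betw)
    with that U V show ?thesis by (auto simp: ensemble_def transpose_def)
  qed
  then have "bij_betw (\<lambda>b. b \<circ> ?\<tau>) (ensemble K Lam lam) (ensemble K Lam lam)"
    by (intro bij_betwI[where g = "\<lambda>b. b \<circ> ?\<tau>"]) (auto simp: fun_eq_iff)
  then have "(\<Sum>b\<in>ensemble K Lam lam. (b \<circ> ?\<tau>) V) = (\<Sum>b\<in>ensemble K Lam lam. b V)"
    by (rule sum.reindex_bij_betw)
  then show ?thesis by simp
qed

lemma sum_ensemble_apply:
  assumes U: "U \<in> lam_subsets Lam lam"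
  shows "real (\<Sum>b\<in>ensemble K Lam lam. b U) = real K * real (card (ensemble K Lam lam)) / real (Lam choose lam)"
proof -
  have "(Lam choose lam) * (\<Sum>b\<in>ensemble K Lam lam. b U)
      = (\<Sum>V\<in>lam_subsets Lam lam. \<Sum>b\<in>ensemble K Lam lam. b V)"
    using sum_ensemble_apply_eq[OF _ U] by (simp add: card_lam_subsets)
  also have "\<dots> = (\<Sum>b\<in>ensemble K Lam lam. K)"
    by (subst sum.swap) (simp add: ensemble_def)
  also have "\<dots> = K * card (ensemble K Lam lam)" by simp
  finally have "real (Lam choose lam) * real (\<Sum>b\<in>ensemble K Lam lam. b U) = real K * real (card (ensemble K Lam lam))"
    by (metis of_nat_mult)
  moreover have "0 < Lam choose lam"
    using U finite_lam_subsets[of Lam lam] by (auto simp flip: card_lam_subsets simp: card_gt_0_iff)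
  ultimately show ?thesis by (simp add: field_simps)
qed

lemma sum_ensemble_weighted:
  "(\<Sum>b\<in>ensemble K Lam lam. \<Sum>U\<in>lam_subsets Lam lam. real (b U) * W U)
    = real K * real (card (ensemble K Lam lam)) / real (Lam choose lam) * (\<Sum>U\<in>lam_subsets Lam lam. W U)"
proof -
  have "(\<Sum>b\<in>ensemble K Lam lam. \<Sum>U\<in>lam_subsets Lam lam. real (b U) * W U)
      = (\<Sum>U\<in>lam_subsets Lam lam. real (\<Sum>b\<in>ensemble K Lam lam. b U) * W U)"
    by (subst sum.swap) (simp add: sum_distrib_right)
  also have "\<dots> = (\<Sum>U\<in>lam_subsets Lam lam. real K * real (card (ensemble K Lam lam)) / real (Lam choose lam) * W U)"
    by (intro sum.cong refl) (simp only: sum_ensemble_apply)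
  finally show ?thesis by (simp add: sum_distrib_left)
qed

definition nonneg_decreasing_convex :: "(nat \<Rightarrow> real) \<Rightarrow> bool" where
  "nonneg_decreasing_convex y \<longleftrightarrow>
     (\<forall>t. 0 \<le> y t \<and> y (Suc t) \<le> y t \<and> 2 * y (Suc t) \<le> y t + y (Suc (Suc t)))"

lemma nonneg_decreasing_convex_mult:
  assumes "nonneg_decreasing_convex a" "nonneg_decreasing_convex b"
  shows "nonneg_decreasing_convex (\<lambda>t. a t * b t)"
  unfolding nonneg_decreasing_convex_def
proof (intro allI conjI)
  fix t
  have a: "0 \<le> a t" "0 \<le> a (Suc t)" "0 \<le> a (Suc (Suc t))" "a (Suc t) \<le> a t" "a (Suc (Suc t)) \<le> a (Suc t)"
    "2 * a (Suc t) \<le> a t + a (Suc (Suc t))" using assms(1) unfolding nonneg_decreasing_convex_def by blast+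
  have b: "0 \<le> b t" "0 \<le> b (Suc t)" "0 \<le> b (Suc (Suc t))" "b (Suc t) \<le> b t" "b (Suc (Suc t)) \<le> b (Suc t)"
    "2 * b (Suc t) \<le> b t + b (Suc (Suc t))" using assms(2) unfolding nonneg_decreasing_convex_def by blast+
  show "0 \<le> a t * b t" using a b by simp
  show "a (Suc t) * b (Suc t) \<le> a t * b t" using a b by (intro mult_mono) auto
  have "4 * (a (Suc t) * b (Suc t)) = (2 * a (Suc t)) * (2 * b (Suc t))" by simp
  also have "\<dots> \<le> (a t + a (Suc (Suc t))) * (b t + b (Suc (Suc t)))"
    using a b by (intro mult_mono) auto
  also have "\<dots> \<le> 2 * (a t * b t + a (Suc (Suc t)) * b (Suc (Suc t)))"
  proof -
    have "0 \<le> (a t - a (Suc (Suc t))) * (b t - b (Suc (Suc t)))" using a b by simp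
    then show ?thesis by (simp add: algebra_simps)
  qed
  finally show "2 * (a (Suc t) * b (Suc t)) \<le> a t * b t + a (Suc (Suc t)) * b (Suc (Suc t))" by simp
qed

lemma nonneg_decreasing_convex_prod:
  assumes "\<And>j. j \<in> J \<Longrightarrow> nonneg_decreasing_convex (a j)"
  shows "nonneg_decreasing_convex (\<lambda>t. \<Prod>j\<in>J. a j t)"
  using assms
proof (induction J rule: infinite_finite_induct)
  case (insert x F)
  then show ?case using nonneg_decreasing_convex_mult[of "a x" "\<lambda>t. \<Prod>j\<in>F. a j t"] by simp
qed (simp_all add: nonneg_decreasing_convex_def)

lemma nonneg_decreasing_convex_const: "0 \<le> c \<Longrightarrow> nonneg_decreasing_convex (\<lambda>t. c)"
  by (simp add: nonneg_decreasing_convex_def)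

lemma nonneg_decreasing_convex_add:
  "nonneg_decreasing_convex a \<Longrightarrow> nonneg_decreasing_convex b \<Longrightarrow> nonneg_decreasing_convex (\<lambda>t. a t + b t)"
  unfolding nonneg_decreasing_convex_def by (simp add: add_mono add_nonneg_nonneg add.assoc) (smt (verit))

lemma nonneg_decreasing_convex_ramp: "nonneg_decreasing_convex (\<lambda>t. max 0 (c - real t))"
  unfolding nonneg_decreasing_convex_def by (auto simp: max_def)

lemma nonneg_decreasing_convex_inverse:
  assumes "0 < c"
  shows "nonneg_decreasing_convex (\<lambda>t. 1 / (real t + c))"
  unfolding nonneg_decreasing_convex_def
proof (intro allI conjI)
  fix t
  define x where "x = real t + c"
  have x: "0 < x" "0 < x + 1" "0 < x + 2" using assms by (simp_all add: x_def)
  show "0 \<le> 1 / (real t + c)" using x by (simp add: x_def)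
  show "1 / (real (Suc t) + c) \<le> 1 / (real t + c)" using x by (intro divide_left_mono) (auto simp: x_def)
  have "1 / (x + 1) - 1 / (x + 2) = 1 / ((x + 1) * (x + 2))" "1 / x - 1 / (x + 1) = 1 / (x * (x + 1))"
    using x by (simp_all add: diff_frac_eq)
  moreover have "1 / ((x + 1) * (x + 2)) \<le> 1 / (x * (x + 1))"
    using x by (intro divide_left_mono mult_mono) auto
  ultimately have "2 / (x + 1) \<le> 1 / x + 1 / (x + 2)" by linarith
  then show "2 * (1 / (real (Suc t) + c)) \<le> 1 / (real t + c) + 1 / (real (Suc (Suc t)) + c)"
    by (simp add: x_def add_ac)
qed

lemma of_nat_binomial_mult_fact: "real (n choose k) * fact k = (\<Prod>i<k. max 0 (real n - real i))"
proof -
  have "real (n choose k) * fact k = (\<Prod>i<k. real n - real i)"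
    using gbinomial_mult_fact'[of "real n" k] by (simp add: binomial_gbinomial atLeast0LessThan)
  also have "\<dots> = (\<Prod>i<k. max 0 (real n - real i))"
  proof (cases "k \<le> n")
    case False
    then have "n \<in> {..<k}" by simp
    have "(\<Prod>i<k. real n - real i) = 0"
      by (rule prod_zero) (use \<open>n \<in> {..<k}\<close> in \<open>auto intro!: bexI[of _ n]\<close>)
    moreover have "(\<Prod>i<k. max 0 (real n - real i)) = 0"
      by (rule prod_zero) (use \<open>n \<in> {..<k}\<close> in \<open>auto intro!: bexI[of _ n]\<close>)
    ultimately show ?thesis by (simp only:)
  qed (auto intro: prod.cong)
  finally show ?thesis .
qed

lemma of_nat_binomial_shift_mult_fact:
  "real ((t + k) choose k) * fact k = (\<Prod>j<k. real t + 1 + real j)"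
proof (induction k)
  case (Suc k)
  have "real ((t + Suc k) choose Suc k) * fact (Suc k) = real ((Suc (t + k) choose Suc k) * Suc k) * fact k"
    by (simp add: algebra_simps)
  also have "\<dots> = real (Suc (t + k)) * (real ((t + k) choose k) * fact k)"
    by (subst Suc_times_binomial_eq[symmetric]) (simp only: of_nat_mult mult_ac)
  also have "\<dots> = real (Suc (t + k)) * (\<Prod>j<k. real t + 1 + real j)" by (simp only: Suc)
  also have "\<dots> = (\<Prod>j<Suc k. real t + 1 + real j)" by (simp add: algebra_simps)
  finally show ?case .
qed simp

lemma of_nat_binomial_diff_mult_fact:
  "real ((L - t) choose k) * fact k = (\<Prod>i<k. max 0 ((real L - real i) - real t))"
proof -
  have "max 0 (real (L - t) - real i) = max 0 ((real L - real i) - real t)" for i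
    by (cases "t \<le> L") (auto simp: of_nat_diff max_def)
  then show ?thesis by (simp add: of_nat_binomial_mult_fact)
qed

lemma nonneg_decreasing_convex_binomial:
  "nonneg_decreasing_convex (\<lambda>t. real ((L - t) choose k))"
proof -
  have "real ((L - t) choose k) = 1 / fact k * (\<Prod>i<k. max 0 ((real L - real i) - real t))" for t
    using of_nat_binomial_diff_mult_fact[of L t k] by (simp add: field_simps)
  moreover have "nonneg_decreasing_convex (\<lambda>t. 1 / fact k * (\<Prod>i<k. max 0 ((real L - real i) - real t)))"
    by (intro nonneg_decreasing_convex_mult nonneg_decreasing_convex_const nonneg_decreasing_convex_prod
        nonneg_decreasing_convex_ramp) simp
  ultimately show ?thesis by simp
qed

lemma nonneg_decreasing_convex_binomial_ratio:
  "nonneg_decreasing_convex (\<lambda>t. real ((L - t) choose k) / real ((t + k) choose k))"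
proof -
  have "real ((L - t) choose k) / real ((t + k) choose k)
      = (\<Prod>i<k. max 0 ((real L - real i) - real t)) * (\<Prod>j<k. 1 / (real t + (1 + real j)))" for t
  proof -
    have "real ((L - t) choose k) / real ((t + k) choose k)
        = (real ((L - t) choose k) * fact k) / (real ((t + k) choose k) * fact k)" by simp
    also have "\<dots> = (\<Prod>i<k. max 0 ((real L - real i) - real t)) / (\<Prod>j<k. real t + (1 + real j))"
      unfolding of_nat_binomial_diff_mult_fact of_nat_binomial_shift_mult_fact by (simp add: add.assoc)
    finally show ?thesis by (simp add: prod_dividef)
  qed
  moreover have "nonneg_decreasing_convex
      (\<lambda>t. (\<Prod>i<k. max 0 ((real L - real i) - real t)) * (\<Prod>j<k. 1 / (real t + (1 + real j))))"
    by (intro nonneg_decreasing_convex_mult nonneg_decreasing_convex_prod nonneg_decreasing_convex_ramp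
        nonneg_decreasing_convex_inverse) simp
  ultimately show ?thesis by simp
qed

lemma binomial_mult_shift: "(n choose (t + k)) * ((t + k) choose k) = (n choose t) * ((n - t) choose k)"
proof (cases "t + k \<le> n")
  case True
  then show ?thesis
    using choose_mult[of t "t + k" n] binomial_symmetric[of t "t + k"] by simp
qed (cases "t \<le> n"; simp add: binomial_eq_0)

lemma LB_y_eq:
  assumes "1 \<le> lam"
  shows "LB_y K Lam lam t = real K * real ((Lam - t) choose lam) / (real (Lam choose lam) * real ((t + lam) choose lam))
    + A_term K Lam lam t"
proof -
  have ratio: "real (Lam choose (t + lam)) / real (Lam choose t) = real ((Lam - t) choose lam) / real ((t + lam) choose lam)"
  proof (cases "t \<le> Lam")
    case True
    then show ?thesis using binomial_mult_shift[of Lam t lam]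
      by (simp add: field_simps flip: of_nat_mult)
  qed (use assms in \<open>simp add: binomial_eq_0\<close>)
  have "real K * real (Lam choose (t + lam)) / (real (Lam choose lam) * real (Lam choose t))
      = real K * (real (Lam choose (t + lam)) / real (Lam choose t)) / real (Lam choose lam)" by simp
  then show ?thesis unfolding LB_y_def ratio by simp
qed

lemma ensemble_size_mult_LB_y:
  assumes "1 \<le> lam" "0 < ensemble_size K Lam lam"
  shows "real (ensemble_size K Lam lam) * LB_y K Lam lam t
    = real K * real (ensemble_size K Lam lam) / real (Lam choose lam)
        * (real ((Lam - t) choose lam) / real ((t + lam) choose lam))
      + real K * (1 - 1 / real ((t + lam) choose lam)) * real ((Lam - t) choose lam)"
proof -
  have "E * (k * h / (m * C) + k / E * h * (1 - 1 / C)) = k * E / m * (h / C) + k * (1 - 1 / C) * h"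
    if "E \<noteq> 0" "C \<noteq> 0" for E C m h k :: real
    using that by (simp add: field_simps)
  then show ?thesis
    using assms(2) unfolding LB_y_eq[OF assms(1)] A_term_def by (simp add: add.commute)
qed

lemma Lam_choose_le_ensemble_size:
  assumes "0 < K" shows "Lam choose lam \<le> ensemble_size K Lam lam"
proof -
  have "card (lam_subsets Lam lam) \<le> card (ensemble K Lam lam)"
    using inj_on_concentrated[OF assms] concentrated_in_ensemble finite_ensemble
    by (intro card_inj_on_le) auto
  then show ?thesis by (simp add: card_lam_subsets card_ensemble)
qed

lemma nonneg_decreasing_convex_LB_y:
  assumes "1 \<le> lam" "lam \<le> Lam" "0 < K"
  shows "nonneg_decreasing_convex (LB_y K Lam lam)"
proof -
  define m where "m = real (Lam choose lam)"
  define E where "E = real (ensemble_size K Lam lam)"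
  have m: "0 < m" "m \<le> E"
    using assms Lam_choose_le_ensemble_size[OF assms(3)] by (simp_all add: m_def E_def)
  have split: "LB_y K Lam lam t = (real K / m - real K / E) * (real ((Lam - t) choose lam) / real ((t + lam) choose lam))
      + real K / E * real ((Lam - t) choose lam)" for t
  proof -
    define h where "h = real ((Lam - t) choose lam)"
    define C where "C = real ((t + lam) choose lam)"
    have "C \<noteq> 0" by (simp add: C_def)
    then have "real K * h / (m * C) + real K / E * h * (1 - 1 / C) = (real K / m - real K / E) * (h / C) + real K / E * h"
      using m by (simp add: field_simps)
    then show ?thesis unfolding LB_y_eq[OF assms(1)] A_term_def by (simp add: m_def E_def h_def C_def)
  qed
  have "0 \<le> real K / m - real K / E" "0 \<le> real K / E" using m by (simp_all add: frac_le)
  then show ?thesis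
    unfolding split[abs_def] by (intro nonneg_decreasing_convex_add nonneg_decreasing_convex_mult nonneg_decreasing_convex_const
        nonneg_decreasing_convex_binomial nonneg_decreasing_convex_binomial_ratio; simp)
qed

lemma avoiding_mass_add:
  "avoiding_mass Lam (\<lambda>T. f T + g T) U = avoiding_mass Lam f U + avoiding_mass Lam g U"
  unfolding avoiding_mass_def sum.distrib[symmetric] by (intro sum.cong) auto

lemma card_lam_subsets_disjoint:
  assumes "T \<subseteq> {..<Lam}"
  shows "card {U \<in> lam_subsets Lam lam. U \<inter> T = {}} = (Lam - card T) choose lam"
proof -
  have "{U \<in> lam_subsets Lam lam. U \<inter> T = {}} = {U. U \<subseteq> {..<Lam} - T \<and> card U = lam}"
    unfolding lam_subsets_def by auto
  moreover have "card ({..<Lam} - T) = Lam - card T"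
    using assms by (simp add: card_Diff_subset finite_subset)
  ultimately show ?thesis using n_subsets[of "{..<Lam} - T" lam] by simp
qed

lemma sum_lam_subsets_avoiding_mass:
  "(\<Sum>U\<in>lam_subsets Lam lam. avoiding_mass Lam g U)
    = (\<Sum>T\<in>Pow {..<Lam}. g T * real ((Lam - card T) choose lam))"
  unfolding avoiding_mass_def
proof (subst sum.swap, intro sum.cong refl)
  fix T assume "T \<in> Pow {..<Lam}"
  then show "(\<Sum>U\<in>lam_subsets Lam lam. if U \<inter> T = {} then g T else 0) = g T * real ((Lam - card T) choose lam)"
    using sum.inter_filter[OF finite_lam_subsets[of Lam lam], of "\<lambda>_. g T" "\<lambda>U. U \<inter> T = {}"]
    by (simp add: card_lam_subsets_disjoint mult.commute)
qed

text \<open>The second sum vanishes unless all users share one cache set; there it adds the gain of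
  the stronger bound over the permutation bound.\<close>
lemma load_vec_ge_mixed:
  assumes B: "0 < B" and KN: "K \<le> N" and N: "0 < N" and K: "0 < K" and b: "b \<in> ensemble K Lam lam"
    and pl: "\<forall>n<N. \<forall>i<B. pl n i \<subseteq> {..<Lam}"
  shows "(\<Sum>U\<in>lam_subsets Lam lam. real (b U) *
      avoiding_mass Lam (\<lambda>T. real (subfile_size N B pl T) / real ((card T + lam) choose lam)) U)
    + (\<Sum>U0\<in>lam_subsets Lam lam. if b = concentrated K U0 then real K *
      avoiding_mass Lam (\<lambda>T. real (subfile_size N B pl T) * (1 - 1 / real ((card T + lam) choose lam))) U0
      else 0)
    \<le> load_vec K N B pl b * (real N * real B)"
    (is "?W b + ?X b \<le> _")
proof (cases "\<exists>U0\<in>lam_subsets Lam lam. b = concentrated K U0")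
  case True
  then obtain U0 where U0: "U0 \<in> lam_subsets Lam lam" and b_eq: "b = concentrated K U0" by blast
  have "?W b = (\<Sum>U\<in>lam_subsets Lam lam. if U = U0 then real K *
      avoiding_mass Lam (\<lambda>T. real (subfile_size N B pl T) / real ((card T + lam) choose lam)) U else 0)"
    by (intro sum.cong) (auto simp: b_eq concentrated_def)
  also have "\<dots> = real K * avoiding_mass Lam (\<lambda>T. real (subfile_size N B pl T) / real ((card T + lam) choose lam)) U0"
    using U0 by (simp add: finite_lam_subsets)
  finally have "?W b = \<dots>" .
  moreover have "?X b = real K *
      avoiding_mass Lam (\<lambda>T. real (subfile_size N B pl T) * (1 - 1 / real ((card T + lam) choose lam))) U0"
  proof -
    have "b = concentrated K U \<longleftrightarrow> U = U0" for U
      using inj_on_concentrated[OF K, of UNIV] by (auto simp: b_eq inj_on_def)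
    then show ?thesis using U0 by (simp add: finite_lam_subsets)
  qed
  moreover have "(\<lambda>T. real (subfile_size N B pl T) / real ((card T + lam) choose lam)
      + real (subfile_size N B pl T) * (1 - 1 / real ((card T + lam) choose lam)))
      = (\<lambda>T. real (subfile_size N B pl T))"
    by (rule ext) (simp add: field_simps)
  ultimately have "?W b + ?X b = real K * avoiding_mass Lam (\<lambda>T. real (subfile_size N B pl T)) U0"
    by (simp only: distrib_left[symmetric] avoiding_mass_add[symmetric])
  then show ?thesis using load_vec_ge_concentrated[OF B KN N U0 pl] by (simp add: b_eq)
next
  case False
  then have "?X b = 0" by (intro sum.neutral) auto
  then show ?thesis using load_vec_ge_avoiding_mass[OF B KN N b pl] by simp
qed

lemma average_load_vec_ge:
  assumes B: "0 < B" and KN: "K \<le> N" and N: "0 < N" and K: "0 < K" and lam: "1 \<le> lam" "lam \<le> Lam"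
    and pl: "\<forall>n<N. \<forall>i<B. pl n i \<subseteq> {..<Lam}"
  shows "(\<Sum>T\<in>Pow {..<Lam}. real (subfile_size N B pl T) * LB_y K Lam lam (card T)) / (real N * real B)
    \<le> (\<Sum>b\<in>ensemble K Lam lam. load_vec K N B pl b) / real (card (ensemble K Lam lam))"
proof -
  define c where "c T = real (subfile_size N B pl T)" for T
  define C where "C T = real ((card T + lam) choose lam)" for T :: "nat set"
  define E where "E = real (ensemble_size K Lam lam)"
  define m where "m = real (Lam choose lam)"
  define W where "W = avoiding_mass Lam (\<lambda>T. c T / C T)"
  define X where "X = avoiding_mass Lam (\<lambda>T. c T * (1 - 1 / C T))"
  have m: "0 < m" "m \<le> E"
    using lam Lam_choose_le_ensemble_size[OF K] by (simp_all add: m_def E_def)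
  have sum_X: "(\<Sum>b\<in>ensemble K Lam lam. \<Sum>U0\<in>lam_subsets Lam lam. if b = concentrated K U0 then real K * X U0 else 0)
      = real K * (\<Sum>U\<in>lam_subsets Lam lam. X U)"
    by (subst sum.swap) (simp add: concentrated_in_ensemble finite_ensemble sum_distrib_left)
  have "(\<Sum>b\<in>ensemble K Lam lam. (\<Sum>U\<in>lam_subsets Lam lam. real (b U) * W U)
      + (\<Sum>U0\<in>lam_subsets Lam lam. if b = concentrated K U0 then real K * X U0 else 0))
      \<le> (\<Sum>b\<in>ensemble K Lam lam. load_vec K N B pl b * (real N * real B))"
    unfolding W_def X_def c_def C_def by (intro sum_mono load_vec_ge_mixed[OF B KN N K _ pl])
  then have "(\<Sum>b\<in>ensemble K Lam lam. load_vec K N B pl b * (real N * real B))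
      \<ge> real K * E / m * (\<Sum>U\<in>lam_subsets Lam lam. W U) + real K * (\<Sum>U\<in>lam_subsets Lam lam. X U)"
    by (simp only: sum.distrib sum_ensemble_weighted sum_X card_ensemble E_def m_def)
  also have "real K * E / m * (\<Sum>U\<in>lam_subsets Lam lam. W U) + real K * (\<Sum>U\<in>lam_subsets Lam lam. X U)
      = E * (\<Sum>T\<in>Pow {..<Lam}. c T * LB_y K Lam lam (card T))"
    unfolding W_def X_def sum_lam_subsets_avoiding_mass sum_distrib_left sum.distrib[symmetric]
  proof (intro sum.cong refl)
    fix T
    have "E * (c T * LB_y K Lam lam (card T)) = c T * (E * LB_y K Lam lam (card T))"
      by (simp only: mult.left_commute)
    also have "\<dots> = c T * (real K * E / m * (real ((Lam - card T) choose lam) / C T)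
        + real K * (1 - 1 / C T) * real ((Lam - card T) choose lam))"
      using m by (simp only: E_def m_def C_def ensemble_size_mult_LB_y[OF lam(1)] add.commute)
    finally show "real K * E / m * (c T / C T * real ((Lam - card T) choose lam))
        + real K * (c T * (1 - 1 / C T) * real ((Lam - card T) choose lam))
        = E * (c T * LB_y K Lam lam (card T))"
      by (simp add: algebra_simps)
  qed
  finally have "E * (\<Sum>T\<in>Pow {..<Lam}. c T * LB_y K Lam lam (card T))
      \<le> (\<Sum>b\<in>ensemble K Lam lam. load_vec K N B pl b) * (real N * real B)"
    by (simp add: sum_distrib_right)
  then show ?thesis using m B N by (simp add: c_def E_def card_ensemble field_simps)
qed

lemma nonneg_decreasing_convex_above_chord:
  assumes "nonneg_decreasing_convex y"
  shows "y s + (real t - real s) * (y (Suc s) - y s) \<le> y t"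
proof -
  define D where "D i = y (Suc i) - y i" for i
  have D_Suc: "D i \<le> D (Suc i)" for i using assms unfolding nonneg_decreasing_convex_def D_def by smt
  have D_mono: "D i \<le> D j" if "i \<le> j" for i j
    using that by (induction rule: dec_induct) (auto intro: order_trans D_Suc)
  have up: "y s + real k * D s \<le> y (s + k)" for k
  proof (induction k)
    case (Suc k)
    have "y s + real (Suc k) * D s = (y s + real k * D s) + D s" by (simp add: algebra_simps)
    also have "\<dots> \<le> y (s + k) + D (s + k)" using Suc D_mono[of s "s + k"] by simp
    finally show ?case by (simp add: D_def)
  qed simp
  have down: "y s - real k * D s \<le> y (s - k)" if "k \<le> s" for k
    using that
  proof (induction k)
    case (Suc k)
    then have "y s - real (Suc k) * D s \<le> y (s - k) - D (s - Suc k)"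
      using D_mono[of "s - Suc k" s] by (simp add: algebra_simps)
    also have "\<dots> = y (s - Suc k)" using Suc.prems by (simp add: D_def Suc_diff_Suc)
    finally show ?case .
  qed simp
  show ?thesis
  proof (cases "s \<le> t")
    case True
    then show ?thesis using up[of "t - s"] by (simp add: D_def of_nat_diff)
  next
    case False
    then show ?thesis using down[of "s - t"] by (simp add: D_def of_nat_diff algebra_simps)
  qed
qed

lemma R_avg_LB_eq_chord:
  assumes "1 \<le> Lam" "0 < N" "M \<le> real N * real (Lam - lam + 1) / real Lam"
  obtains s where "R_avg_LB N K Lam lam M
    = LB_y K Lam lam s + (M * real Lam / real N - real s) * (LB_y K Lam lam (Suc s) - LB_y K Lam lam s)"
proof -
  define s where "s = (LEAST t. t < Lam - lam + 1 \<and> M \<le> LB_x N Lam (Suc t))"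
  have "Lam - lam < Lam - lam + 1 \<and> M \<le> LB_x N Lam (Suc (Lam - lam))"
    using assms by (simp add: LB_x_def mult.commute)
  then have "s < Lam - lam + 1" unfolding s_def by (rule LeastI2) simp
  have "LB_x N Lam (Suc s) - LB_x N Lam s = real N / real Lam"
    by (simp add: LB_x_def add_divide_distrib algebra_simps)
  then have "(M - LB_x N Lam s) / (LB_x N Lam (Suc s) - LB_x N Lam s) = M * real Lam / real N - real s"
    using assms by (simp add: LB_x_def field_simps)
  then have "R_avg_LB N K Lam lam M
      = LB_y K Lam lam s + (M * real Lam / real N - real s) * (LB_y K Lam lam (Suc s) - LB_y K Lam lam s)"
    unfolding R_avg_LB_def pl_interp_def Let_def s_def by simp
  then show ?thesis by (rule that)
qed

lemma sum_subfile_size: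
  assumes "\<forall>n<N. \<forall>i<B. pl n i \<subseteq> {..<Lam}"
  shows "(\<Sum>T\<in>Pow {..<Lam}. real (subfile_size N B pl T)) = real N * real B"
proof -
  have "{(n, i). n < N \<and> i < B \<and> True} = {..<N} \<times> {..<B}" by auto
  then show ?thesis using card_bits_eq_sum_subfile_size[OF assms, of "\<lambda>_. True"] by simp
qed

lemma sum_subfile_size_card_le:
  assumes "uncoded_placement Lam N M B pl"
  shows "(\<Sum>T\<in>Pow {..<Lam}. real (subfile_size N B pl T) * real (card T)) \<le> real Lam * (M * real B)"
proof -
  have pl: "\<forall>n<N. \<forall>i<B. pl n i \<subseteq> {..<Lam}" using assms by (simp add: uncoded_placement_def)
  have "(\<Sum>T\<in>Pow {..<Lam}. real (subfile_size N B pl T) * real (card T))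
      = (\<Sum>T\<in>Pow {..<Lam}. \<Sum>l<Lam. if l \<in> T then real (subfile_size N B pl T) else 0)"
  proof (intro sum.cong refl)
    fix T assume "T \<in> Pow {..<Lam}"
    then have "{l \<in> {..<Lam}. l \<in> T} = T" by auto
    then show "real (subfile_size N B pl T) * real (card T) = (\<Sum>l<Lam. if l \<in> T then real (subfile_size N B pl T) else 0)"
      using sum.inter_filter[of "{..<Lam}" "\<lambda>_. real (subfile_size N B pl T)" "\<lambda>l. l \<in> T"]
      by (simp add: mult.commute)
  qed
  also have "\<dots> = (\<Sum>l<Lam. real (card {(n, i). n < N \<and> i < B \<and> l \<in> pl n i}))"
    by (subst sum.swap) (simp add: card_bits_eq_sum_subfile_size[OF pl])
  also have "\<dots> \<le> (\<Sum>l<Lam. M * real B)"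
    using assms by (intro sum_mono) (simp add: uncoded_placement_def)
  finally show ?thesis by simp
qed

lemma R_avg_LB_le_placement_sum:
  assumes up: "uncoded_placement Lam N M B pl" and N: "0 < N" and Lam: "1 \<le> Lam"
    and M: "M \<le> real N * real (Lam - lam + 1) / real Lam"
    and convex: "nonneg_decreasing_convex (LB_y K Lam lam)"
  shows "R_avg_LB N K Lam lam M
    \<le> (\<Sum>T\<in>Pow {..<Lam}. real (subfile_size N B pl T) * LB_y K Lam lam (card T)) / (real N * real B)"
proof -
  have B: "0 < B" and pl: "\<forall>n<N. \<forall>i<B. pl n i \<subseteq> {..<Lam}" using up by (auto simp: uncoded_placement_def)
  obtain s where s: "R_avg_LB N K Lam lam M = LB_y K Lam lam s + (M * real Lam / real N - real s) *
      (LB_y K Lam lam (Suc s) - LB_y K Lam lam s)"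
    using R_avg_LB_eq_chord[OF Lam N M] by blast
  define y where "y = LB_y K Lam lam"
  define D where "D = y (Suc s) - y s"
  define c where "c T = real (subfile_size N B pl T)" for T
  have D: "D \<le> 0" using convex unfolding nonneg_decreasing_convex_def D_def y_def by simp
  have "(y s - real s * D) * (real N * real B) + D * (real Lam * (M * real B))
      \<le> (y s - real s * D) * (\<Sum>T\<in>Pow {..<Lam}. c T) + D * (\<Sum>T\<in>Pow {..<Lam}. c T * real (card T))"
    using sum_subfile_size_card_le[OF up] sum_subfile_size[OF pl] D
    by (simp add: c_def mult_left_mono_neg)
  also have "\<dots> = (\<Sum>T\<in>Pow {..<Lam}. c T * (y s + (real (card T) - real s) * D))"
    by (simp add: sum_distrib_left sum_distrib_right sum.distrib algebra_simps sum_subtractf)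
  also have "\<dots> \<le> (\<Sum>T\<in>Pow {..<Lam}. c T * y (card T))"
    using nonneg_decreasing_convex_above_chord[OF convex]
    by (intro sum_mono mult_left_mono) (simp_all add: c_def D_def y_def)
  moreover have "R_avg_LB N K Lam lam M * (real N * real B)
      = (y s - real s * D) * (real N * real B) + D * (real Lam * (M * real B))"
    using N by (simp add: s y_def D_def field_simps)
  ultimately have "R_avg_LB N K Lam lam M * (real N * real B) \<le> (\<Sum>T\<in>Pow {..<Lam}. c T * y (card T))"
    by linarith
  then show ?thesis using N B by (simp add: c_def y_def le_divide_eq)
qed

lemma R_avg_LB_le_average_load:
  assumes up: "uncoded_placement Lam N M B pl" and lam: "1 \<le> Lam" "1 \<le> lam" "lam \<le> Lam"
    and K: "1 \<le> K" "K \<le> N" and M: "M \<le> real N * real (Lam - lam + 1) / real Lam"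
  shows "R_avg_LB N K Lam lam M
    \<le> (\<Sum>b\<in>ensemble K Lam lam. load_vec K N B pl b) / real (card (ensemble K Lam lam))"
proof -
  have N: "0 < N" and B: "0 < B" and pl: "\<forall>n<N. \<forall>i<B. pl n i \<subseteq> {..<Lam}"
    using up K by (auto simp: uncoded_placement_def)
  have "nonneg_decreasing_convex (LB_y K Lam lam)"
    using lam K by (intro nonneg_decreasing_convex_LB_y) auto
  then have "R_avg_LB N K Lam lam M
      \<le> (\<Sum>T\<in>Pow {..<Lam}. real (subfile_size N B pl T) * LB_y K Lam lam (card T)) / (real N * real B)"
    by (rule R_avg_LB_le_placement_sum[OF up N lam(1) M])
  also have "\<dots> \<le> (\<Sum>b\<in>ensemble K Lam lam. load_vec K N B pl b) / real (card (ensemble K Lam lam))"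
    using K by (intro average_load_vec_ge[OF B K(2) N _ lam(2,3) pl]) simp
  finally show ?thesis .
qed

theorem theorem2:
  fixes Lam lam K N :: nat and M :: real
  assumes "1 \<le> Lam" and "1 \<le> lam" and "lam \<le> Lam" and "1 \<le> K" and "K \<le> N"
    and "0 \<le> M" and "M \<le> real N * real (Lam - lam + 1) / real Lam"
  shows "R_avg_LB N K Lam lam M \<le> R_avg_opt N K Lam lam M"
  unfolding R_avg_opt_def
proof (rule cInf_greatest)
  have "uncoded_placement Lam N M 1 (\<lambda>_ _. {})" using assms(6) by (simp add: uncoded_placement_def)
  then show "{r. \<exists>B pl. uncoded_placement Lam N M B pl \<and> r = (\<Sum>b\<in>ensemble K Lam lam. load_vec K N B pl b)
      / real (card (ensemble K Lam lam))} \<noteq> {}" by blast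
qed (use R_avg_LB_le_average_load assms in blast)

end
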